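(* Let $\mathcal{M}$ be a test space and let $\mu\in\mathbb{W}$. Then $\|\mu\|_1=\sup\{\mu(a)-\mu(E\setminus a): E\in\mathcal{M},\ a\subseteq E\}$. Hence the norms $\|\cdot\|_{\mathcal{E}}$ and $\|\cdot\|_1$ on $\mathbb{W}$ are equivalent.
   Context: A test space is an irredundant collection $\mathcal{M}$ of nonempty sets (tests) with outcome set $X=\bigcup\mathcal{M}$; an event is a subset of a test. $\mathbb{W}$ is the space of functions $\mu:X\to\mathbb{R}$ such that $\|\mu\|_1:=\sup_{E\in\mathcal{M}}\sum_{x\in E}|\mu(x)|<\infty$ and there is a constant $c$ with $\sum_{x\in E}\mu(x)=c$ for all $E\in\mathcal{M}$. For an event $a$, $\mu(a)=\sum_{x\in a}\mu(x)$, and $\|\mu\|_{\mathcal{E}}=\sup\{|\mu(a)|: a \text{ an event}\}$. *)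

theory Defs
  imports "HOL-Analysis.Analysis"
begin

definition test_space :: "'a set set \<Rightarrow> bool" where
  "test_space M \<longleftrightarrow> (\<forall>E\<in>M. E \<noteq> {}) \<and> (\<forall>E\<in>M. \<forall>F\<in>M. E \<subseteq> F \<longrightarrow> E = F)"

definition outcomes :: "'a set set \<Rightarrow> 'a set" where
  "outcomes M = \<Union>M"

definition events :: "'a set set \<Rightarrow> 'a set set" where
  "events M = {a. \<exists>E\<in>M. a \<subseteq> E}"

definition wval :: "('a \<Rightarrow> real) \<Rightarrow> 'a set \<Rightarrow> real" where
  "wval \<mu> a = infsum \<mu> a"

definition norm1 :: "'a set set \<Rightarrow> ('a \<Rightarrow> real) \<Rightarrow> real" where
  "norm1 M \<mu> = (SUP E\<in>M. infsum (\<lambda>x. \<bar>\<mu> x\<bar>) E)"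

definition normE :: "'a set set \<Rightarrow> ('a \<Rightarrow> real) \<Rightarrow> real" where
  "normE M \<mu> = (SUP a\<in>events M. \<bar>wval \<mu> a\<bar>)"

text \<open>The space \<open>\<W>\<close>: functions \<open>\<mu>\<close> on \<open>X\<close> (represented as functions on the whole type;
  values outside \<open>X\<close> are irrelevant) with \<open>\<parallel>\<mu>\<parallel>\<^sub>1 < \<infinity>\<close>, i.e. the sums
  \<open>\<Sum>x\<in>E. |\<mu> x|\<close> over all tests (equivalently over all finite subsets of tests)
  are uniformly bounded, and with constant total weight \<open>c\<close> on every test.\<close>
definition W :: "'a set set \<Rightarrow> ('a \<Rightarrow> real) set" where
  "W M = {\<mu>. (\<exists>B. \<forall>E\<in>M. \<forall>F. finite F \<and> F \<subseteq> E \<longrightarrow> (\<Sum>x\<in>F. \<bar>\<mu> x\<bar>) \<le> B)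
             \<and> (\<exists>c. \<forall>E\<in>M. (\<mu> has_sum c) E)}"

end

theory Submission
  imports Defs
begin

text \<open>For a test \<open>E\<close> and an event \<open>a \<subseteq> E\<close>, the difference \<open>\<mu>(a) - \<mu>(E - a)\<close> is at most
  \<open>\<Sum>x\<in>E. \<bar>\<mu> x\<bar>\<close>, with equality for \<open>a = {x \<in> E. \<mu> x \<ge> 0}\<close>; taking suprema over the tests
  gives the formula for \<open>\<parallel>\<mu>\<parallel>\<^sub>1\<close>. The same splitting of \<open>E\<close> gives
  \<open>\<bar>\<mu>(a)\<bar> \<le> \<parallel>\<mu>\<parallel>\<^sub>1\<close>, and, as both \<open>\<mu>(a)\<close> and \<open>\<mu>(E - a)\<close> are bounded by \<open>\<parallel>\<mu>\<parallel>\<^sub>\<E>\<close> in absolute value,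
  \<open>\<parallel>\<mu>\<parallel>\<^sub>1 \<le> 2 \<parallel>\<mu>\<parallel>\<^sub>\<E>\<close>.\<close>

lemma infsum_abs_split:
  fixes \<nu> :: "'a \<Rightarrow> real"
  assumes "(\<lambda>x. \<bar>\<nu> x\<bar>) summable_on E" "a \<subseteq> E"
  shows "infsum (\<lambda>x. \<bar>\<nu> x\<bar>) E = infsum (\<lambda>x. \<bar>\<nu> x\<bar>) a + infsum (\<lambda>x. \<bar>\<nu> x\<bar>) (E - a)"
proof -
  have "(\<lambda>x. \<bar>\<nu> x\<bar>) summable_on a" "(\<lambda>x. \<bar>\<nu> x\<bar>) summable_on (E - a)"
    using assms summable_on_subset_banach by blast+
  then have "infsum (\<lambda>x. \<bar>\<nu> x\<bar>) (a \<union> (E - a))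
      = infsum (\<lambda>x. \<bar>\<nu> x\<bar>) a + infsum (\<lambda>x. \<bar>\<nu> x\<bar>) (E - a)"
    by (intro infsum_Un_disjoint) auto
  moreover have "a \<union> (E - a) = E" using assms(2) by blast
  ultimately show ?thesis by simp
qed

lemma abs_wval_le_infsum_abs:
  fixes \<nu> :: "'a \<Rightarrow> real"
  assumes "(\<lambda>x. \<bar>\<nu> x\<bar>) summable_on a"
  shows "\<bar>wval \<nu> a\<bar> \<le> infsum (\<lambda>x. \<bar>\<nu> x\<bar>) a"
  using norm_infsum_bound[of \<nu> a] assms by (simp add: wval_def)

lemma abs_wval_le_infsum_abs_of_subset:
  fixes \<nu> :: "'a \<Rightarrow> real"
  assumes "(\<lambda>x. \<bar>\<nu> x\<bar>) summable_on E" "a \<subseteq> E"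
  shows "\<bar>wval \<nu> a\<bar> \<le> infsum (\<lambda>x. \<bar>\<nu> x\<bar>) E"
  using abs_wval_le_infsum_abs[OF summable_on_subset_banach[OF assms]] infsum_abs_split[OF assms]
    infsum_nonneg[of "E - a" "\<lambda>x. \<bar>\<nu> x\<bar>"] by simp

lemma wval_diff_le_infsum_abs:
  fixes \<nu> :: "'a \<Rightarrow> real"
  assumes "(\<lambda>x. \<bar>\<nu> x\<bar>) summable_on E" "a \<subseteq> E"
  shows "wval \<nu> a - wval \<nu> (E - a) \<le> infsum (\<lambda>x. \<bar>\<nu> x\<bar>) E"
proof -
  have "\<bar>wval \<nu> a\<bar> \<le> infsum (\<lambda>x. \<bar>\<nu> x\<bar>) a"
    and "\<bar>wval \<nu> (E - a)\<bar> \<le> infsum (\<lambda>x. \<bar>\<nu> x\<bar>) (E - a)"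
    using assms by (auto intro!: abs_wval_le_infsum_abs elim: summable_on_subset_banach)
  then show ?thesis using infsum_abs_split[OF assms] by linarith
qed

lemma wval_diff_nonneg_part:
  fixes \<nu> :: "'a \<Rightarrow> real"
  assumes "(\<lambda>x. \<bar>\<nu> x\<bar>) summable_on E"
  shows "wval \<nu> {x\<in>E. 0 \<le> \<nu> x} - wval \<nu> (E - {x\<in>E. 0 \<le> \<nu> x}) = infsum (\<lambda>x. \<bar>\<nu> x\<bar>) E"
proof -
  let ?P = "{x\<in>E. 0 \<le> \<nu> x}"
  have "wval \<nu> ?P = infsum (\<lambda>x. \<bar>\<nu> x\<bar>) ?P"
    unfolding wval_def by (rule infsum_cong) auto
  moreover have "wval \<nu> (E - ?P) = infsum (\<lambda>x. - \<bar>\<nu> x\<bar>) (E - ?P)"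
    unfolding wval_def by (rule infsum_cong) auto
  moreover have "infsum (\<lambda>x. \<bar>\<nu> x\<bar>) E = infsum (\<lambda>x. \<bar>\<nu> x\<bar>) ?P + infsum (\<lambda>x. \<bar>\<nu> x\<bar>) (E - ?P)"
    using assms by (rule infsum_abs_split) blast
  ultimately show ?thesis by (simp add: infsum_uminus)
qed

lemma W_abs_summable:
  assumes "\<nu> \<in> W M" "E \<in> M"
  shows "(\<lambda>x. \<bar>\<nu> x\<bar>) summable_on E"
proof -
  from assms(1) obtain B where "\<forall>E\<in>M. \<forall>F. finite F \<and> F \<subseteq> E \<longrightarrow> (\<Sum>x\<in>F. \<bar>\<nu> x\<bar>) \<le> B"
    unfolding W_def by blast
  with assms(2) show ?thesis
    by (intro nonneg_bdd_above_summable_on) (auto intro!: bdd_aboveI2)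
qed

lemma W_bdd_above_infsum_abs:
  assumes "\<nu> \<in> W M"
  shows "bdd_above ((\<lambda>E. infsum (\<lambda>x. \<bar>\<nu> x\<bar>) E) ` M)"
proof -
  from assms obtain B where B: "\<forall>E\<in>M. \<forall>F. finite F \<and> F \<subseteq> E \<longrightarrow> (\<Sum>x\<in>F. \<bar>\<nu> x\<bar>) \<le> B"
    unfolding W_def by blast
  have "infsum (\<lambda>x. \<bar>\<nu> x\<bar>) E \<le> B" if "E \<in> M" for E
    using infsum_le_finite_sums[OF W_abs_summable[OF assms that]] B that by auto
  then show ?thesis by (meson bdd_aboveI2)
qed

lemma norm1_eq_Sup_wval_diff:
  assumes "\<nu> \<in> W M"
  shows "norm1 M \<nu> = Sup {wval \<nu> a - wval \<nu> (E - a) | E a. E \<in> M \<and> a \<subseteq> E}"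
proof (cases "M = {}")
  case True
  then show ?thesis by (simp add: norm1_def)
next
  case False
  let ?S = "{wval \<nu> a - wval \<nu> (E - a) | E a. E \<in> M \<and> a \<subseteq> E}"
  let ?T = "(\<lambda>E. infsum (\<lambda>x. \<bar>\<nu> x\<bar>) E) ` M"
  have attained: "?T \<subseteq> ?S"
  proof
    fix t assume "t \<in> ?T"
    then obtain E where E: "E \<in> M" "t = infsum (\<lambda>x. \<bar>\<nu> x\<bar>) E" by blast
    then have "t = wval \<nu> {x\<in>E. 0 \<le> \<nu> x} - wval \<nu> (E - {x\<in>E. 0 \<le> \<nu> x})"
      using wval_diff_nonneg_part[OF W_abs_summable[OF assms]] by simp
    moreover have "{x\<in>E. 0 \<le> \<nu> x} \<subseteq> E" by blast
    ultimately show "t \<in> ?S" using E(1) by blast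
  qed
  have dominated: "s \<le> Sup ?T" if "s \<in> ?S" for s
  proof -
    from that obtain E a where E: "E \<in> M" "a \<subseteq> E" and s: "s = wval \<nu> a - wval \<nu> (E - a)"
      by blast
    have "s \<le> infsum (\<lambda>x. \<bar>\<nu> x\<bar>) E"
      unfolding s using W_abs_summable[OF assms E(1)] E(2) by (rule wval_diff_le_infsum_abs)
    also have "\<dots> \<le> Sup ?T"
      using W_bdd_above_infsum_abs[OF assms] E(1) by (intro cSup_upper) auto
    finally show ?thesis .
  qed
  have T_nonempty: "?T \<noteq> {}" using False by blast
  have "Sup ?T \<le> Sup ?S"
    using T_nonempty attained dominated by (intro cSup_subset_mono bdd_aboveI)
  moreover have "Sup ?S \<le> Sup ?T"
    using T_nonempty attained dominated by (intro cSup_least) auto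
  ultimately show ?thesis unfolding norm1_def by (rule order.antisym)
qed

lemma abs_wval_le_norm1:
  assumes "\<nu> \<in> W M" "a \<in> events M"
  shows "\<bar>wval \<nu> a\<bar> \<le> norm1 M \<nu>"
proof -
  from assms(2) obtain E where E: "E \<in> M" "a \<subseteq> E" by (auto simp: events_def)
  have "\<bar>wval \<nu> a\<bar> \<le> infsum (\<lambda>x. \<bar>\<nu> x\<bar>) E"
    using abs_wval_le_infsum_abs_of_subset[OF W_abs_summable[OF assms(1) E(1)] E(2)] .
  also have "\<dots> \<le> norm1 M \<nu>"
    unfolding norm1_def using E(1) W_bdd_above_infsum_abs[OF assms(1)] by (rule cSUP_upper)
  finally show ?thesis .
qed

lemma normE_le_norm1:
  assumes "\<nu> \<in> W M" "M \<noteq> {}"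
  shows "normE M \<nu> \<le> norm1 M \<nu>"
  unfolding normE_def
proof (rule cSUP_least)
  show "events M \<noteq> {}" using assms(2) by (auto simp: events_def)
qed (rule abs_wval_le_norm1[OF assms(1)])

lemma norm1_le_2_normE:
  assumes "\<nu> \<in> W M" "M \<noteq> {}"
  shows "norm1 M \<nu> \<le> 2 * normE M \<nu>"
  unfolding norm1_def
proof (rule cSUP_least[OF assms(2)])
  fix E assume E: "E \<in> M"
  have "bdd_above ((\<lambda>a. \<bar>wval \<nu> a\<bar>) ` events M)"
    using abs_wval_le_norm1[OF assms(1)] by (meson bdd_aboveI2)
  then have bound: "\<bar>wval \<nu> a\<bar> \<le> normE M \<nu>" if "a \<subseteq> E" for a
    unfolding normE_def using E that by (intro cSUP_upper) (auto simp: events_def)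
  have "\<bar>wval \<nu> {x\<in>E. 0 \<le> \<nu> x}\<bar> \<le> normE M \<nu>"
    and "\<bar>wval \<nu> (E - {x\<in>E. 0 \<le> \<nu> x})\<bar> \<le> normE M \<nu>"
    by (rule bound[OF Collect_subset], rule bound[OF Diff_subset])
  then show "infsum (\<lambda>x. \<bar>\<nu> x\<bar>) E \<le> 2 * normE M \<nu>"
    unfolding wval_diff_nonneg_part[OF W_abs_summable[OF assms(1) E], symmetric] by linarith
qed

theorem lemmaC4:
  fixes M :: "'a set set" and \<mu> :: "'a \<Rightarrow> real"
  assumes "test_space M"
    and "\<mu> \<in> W M"
  shows "norm1 M \<mu> = Sup {wval \<mu> a - wval \<mu> (E - a) | E a. E \<in> M \<and> a \<subseteq> E}
         \<and> (\<exists>c C. 0 < c \<and> 0 < C \<and>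
           (\<forall>\<nu>\<in>W M. c * normE M \<nu> \<le> norm1 M \<nu> \<and> norm1 M \<nu> \<le> C * normE M \<nu>))"
proof
  show "norm1 M \<mu> = Sup {wval \<mu> a - wval \<mu> (E - a) | E a. E \<in> M \<and> a \<subseteq> E}"
    using norm1_eq_Sup_wval_diff[OF assms(2)] .
  show "\<exists>c C. 0 < c \<and> 0 < C \<and>
      (\<forall>\<nu>\<in>W M. c * normE M \<nu> \<le> norm1 M \<nu> \<and> norm1 M \<nu> \<le> C * normE M \<nu>)"
  proof (cases "M = {}")
    case True
    \<comment> \<open>both norms are then the unspecified real \<open>Sup {}\<close>, so only \<open>C = 1\<close> is safe\<close>
    then have "normE M \<nu> = norm1 M \<nu>" for \<nu>
      by (simp add: normE_def norm1_def events_def)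
    then show ?thesis by (intro exI[of _ "1::real"]) simp
  next
    case False
    show ?thesis
    proof (rule exI[of _ "1::real"], rule exI[of _ "2::real"], intro conjI ballI)
      fix \<nu> assume "\<nu> \<in> W M"
      show "1 * normE M \<nu> \<le> norm1 M \<nu>" using normE_le_norm1[OF \<open>\<nu> \<in> W M\<close> False] by simp
      show "norm1 M \<nu> \<le> 2 * normE M \<nu>" using norm1_le_2_normE[OF \<open>\<nu> \<in> W M\<close> False] .
    qed simp_all
  qed
qed

end
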